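(* Let $\mu_1\in\mathbb{R}$, $\sigma_1>0$, $\sigma>0$ and $k>0$. Consider two stocks with positive prices $p_{1t},p_{2t}$ at discrete times $t$, such that $$\log(p_{1,t+1})=\log(p_{1t})+\mu_1+\delta_{1,t+1},\qquad \epsilon_t:=\log(p_{2t})-\log(p_{1t}),$$ where the $\delta_{1t}$ are i.i.d. $N(0,\sigma_1^2)$, the $\epsilon_t$ are i.i.d. $N(0,\sigma^2)$, and the family $(\delta_{1t})_t$ is independent of the family $(\epsilon_t)_t$. Define the stock returns $r_{i,t+1}=p_{i,t+1}/p_{it}-1$ for $i=1,2$, the trading signal $$S_t=\mathbb{1}\{\epsilon_t\le -k\sigma\}-\mathbb{1}\{\epsilon_t\ge k\sigma\},$$ and the pair return $r_{t+1}=S_t\,(r_{2,t+1}-r_{1,t+1})$. Let $Z$ be a standard normal random variable. Then the pair return $r_t$ has mean $$\mathbf{E}[r_t]=e^{\mu_1+\sigma_1^2/2+\sigma^2}\,\mathbf{P}(k-\sigma\le Z\le k+\sigma)$$ and variance $$\operatorname{Var}(r_t)=e^{2\mu_1+2\sigma_1^2+4\sigma^2}\big(\mathbf{P}(Z\le -k+2\sigma)+\mathbf{P}(Z\ge k+2\sigma)\big)-2e^{2\mu_1+2\sigma_1^2+\sigma^2}\big(\mathbf{P}(Z\le -k+\sigma)+\mathbf{P}(Z\ge k+\sigma)\big)+2e^{2\mu_1+2\sigma_1^2}\,\mathbf{P}(Z\ge k)-\mathbf{E}[r_t]^2.$$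
   Context: This models a "cointegrated pair" of stocks: stock 1's log-price is a Gaussian random walk with drift, and the log-price difference (the spread) $\epsilon_t$ is i.i.d. Gaussian. The signal is $+1$ when the spread is at most $-k\sigma$, $-1$ when it is at least $k\sigma$, and $0$ otherwise. *)

theory Defs
  imports "HOL-Probability.Probability"
begin

definition signal :: "real \<Rightarrow> real \<Rightarrow> real \<Rightarrow> real" where
  "signal k \<sigma> e = (if e \<le> - k * \<sigma> then 1 else 0) - (if e \<ge> k * \<sigma> then 1 else 0)"

abbreviation std_normal_law :: "real measure" where
  "std_normal_law \<equiv> density lborel std_normal_density"

definition ret :: "(nat \<Rightarrow> 'a \<Rightarrow> real) \<Rightarrow> nat \<Rightarrow> 'a \<Rightarrow> real" where
  "ret p s \<omega> = p (Suc s) \<omega> / p s \<omega> - 1"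

end

(* Writing p2 = exp eps * p1, the pair return factors as r(t+1) = X * Y with
   X = p1(t+1) / p1(t) = exp (mu1 + delta(t+1)) and Y = S(t) * (exp (eps(t+1) - eps(t)) - 1).
   X is a function of the delta family and Y of the eps family, so they are independent and
   E r = E X * E Y, E r^2 = E X^2 * E Y^2.  Every moment needed reduces to exponential tilting of
   the Gaussian density, exp (c x) N(0, s^2)(x) = exp (c^2 s^2 / 2) N(c s^2, s^2)(x): it turns
   E [1{eps in A} exp (c eps)] into exp (c^2 s^2 / 2) times the N(c s^2, s^2)-probability of A,
   and the two indicators making up the signal give the normal tail probabilities of the statement. *)

theory Submission
  imports Defs
begin

abbreviation (input) normal_law :: "real \<Rightarrow> real \<Rightarrow> real measure" where
  "normal_law \<mu> \<sigma> \<equiv> density lborel (normal_density \<mu> \<sigma>)"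

lemma distr_std_normal_law_affine:
  assumes "\<alpha> \<noteq> 0"
  shows "distr std_normal_law lborel (\<lambda>z. \<beta> + \<alpha> * z) = normal_law \<beta> \<bar>\<alpha>\<bar>"
proof -
  interpret std_normal: prob_space std_normal_law
    by (rule prob_space_normal_density) simp
  have "distributed std_normal_law lborel (\<lambda>z. z) std_normal_density"
    by (simp add: distributed_def distr_id2)
  from std_normal.normal_density_affine[OF this _ assms, of \<beta>]
  show ?thesis by (simp add: distributed_def)
qed

lemma measure_normal_law:
  assumes "\<sigma> > 0" and [measurable]: "A \<in> sets borel"
  shows "measure (normal_law \<mu> \<sigma>) A = measure std_normal_law {z. \<mu> + \<sigma> * z \<in> A}"
proof -
  have "measure (normal_law \<mu> \<sigma>) A = measure (distr std_normal_law lborel (\<lambda>z. \<mu> + \<sigma> * z)) A"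
    using distr_std_normal_law_affine[of \<sigma> \<mu>] assms(1) by simp
  also have "\<dots> = measure std_normal_law {z. \<mu> + \<sigma> * z \<in> A}"
    by (subst measure_distr) (auto simp: vimage_def)
  finally show ?thesis .
qed

lemma measure_normal_law_atMost:
  assumes "\<sigma> > 0"
  shows "measure (normal_law \<mu> \<sigma>) {..a} = measure std_normal_law {..(a - \<mu>) / \<sigma>}"
proof -
  have "measure (normal_law \<mu> \<sigma>) {..a} = measure std_normal_law {z. \<mu> + \<sigma> * z \<in> {..a}}"
    using assms by (intro measure_normal_law) auto
  also have "{z. \<mu> + \<sigma> * z \<in> {..a}} = {..(a - \<mu>) / \<sigma>}"
    using assms by (auto simp: pos_le_divide_eq algebra_simps)
  finally show ?thesis .
qed

lemma measure_normal_law_atLeast: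
  assumes "\<sigma> > 0"
  shows "measure (normal_law \<mu> \<sigma>) {a..} = measure std_normal_law {(a - \<mu>) / \<sigma>..}"
proof -
  have "measure (normal_law \<mu> \<sigma>) {a..} = measure std_normal_law {z. \<mu> + \<sigma> * z \<in> {a..}}"
    using assms by (intro measure_normal_law) auto
  also have "{z. \<mu> + \<sigma> * z \<in> {a..}} = {(a - \<mu>) / \<sigma>..}"
    using assms by (auto simp: pos_divide_le_eq algebra_simps)
  finally show ?thesis .
qed

lemma measure_std_normal_law_atMost_uminus:
  "measure std_normal_law {..-a} = measure std_normal_law {a..}"
proof -
  have "measure std_normal_law {..-a} = measure (distr std_normal_law lborel (\<lambda>z. 0 + -1 * z)) {..-a}"
    using distr_std_normal_law_affine[of "-1" 0] by simp
  also have "\<dots> = measure std_normal_law {a..}"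
    by (subst measure_distr) (auto simp: vimage_def atLeast_def)
  finally show ?thesis .
qed

lemma measure_normal_law_atLeastAtMost:
  assumes "\<sigma> > 0" "a \<le> b"
  shows "measure (normal_law \<mu> \<sigma>) {a..b} = measure (normal_law \<mu> \<sigma>) {a..} - measure (normal_law \<mu> \<sigma>) {b..}"
proof -
  interpret prob_space "normal_law \<mu> \<sigma>"
    using assms(1) by (rule prob_space_normal_density)
  have "AE x in lborel. x \<in> {b} \<longrightarrow> normal_density \<mu> \<sigma> x = 0"
    using AE_lborel_singleton[of b] by eventually_elim auto
  then have "measure (normal_law \<mu> \<sigma>) {b} = 0"
    by (intro measure_eq_0_null_sets) (simp add: null_sets_density_iff)
  moreover have "{a..} = {a..b} \<union> {b<..}" "{b..} = {b} \<union> {b<..}"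
    using assms(2) by auto
  then have "prob {a..} = prob {a..b} + prob {b<..}" "prob {b..} = prob {b} + prob {b<..}"
    by (simp_all only:) (rule finite_measure_Union; auto)+
  ultimately show ?thesis by simp
qed

lemma measure_normal_law_integral:
  assumes "\<sigma> > 0" and [measurable]: "A \<in> sets borel"
  shows "measure (normal_law \<mu> \<sigma>) A = (\<integral>x. indicator A x * normal_density \<mu> \<sigma> x \<partial>lborel)"
proof -
  interpret prob_space "normal_law \<mu> \<sigma>"
    using assms(1) by (rule prob_space_normal_density)
  have "measure (normal_law \<mu> \<sigma>) A = integral\<^sup>L (normal_law \<mu> \<sigma>) (indicator A)"
    by simp
  also have "\<dots> = (\<integral>x. normal_density \<mu> \<sigma> x * indicator A x \<partial>lborel)"
    by (subst integral_real_density) auto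
  finally show ?thesis by (simp add: mult.commute)
qed

lemma normal_density_exp_tilt:
  assumes "\<sigma> > 0"
  shows "exp (c * x) * normal_density \<mu> \<sigma> x
    = exp (c * \<mu> + c\<^sup>2 * \<sigma>\<^sup>2 / 2) * normal_density (\<mu> + c * \<sigma>\<^sup>2) \<sigma> x"
proof -
  have "c * x + - (x - \<mu>)\<^sup>2 / (2 * \<sigma>\<^sup>2)
      = (c * \<mu> + c\<^sup>2 * \<sigma>\<^sup>2 / 2) + - (x - (\<mu> + c * \<sigma>\<^sup>2))\<^sup>2 / (2 * \<sigma>\<^sup>2)"
    using assms by (simp add: field_simps power2_eq_square)
  then have "exp (c * x) * exp (- (x - \<mu>)\<^sup>2 / (2 * \<sigma>\<^sup>2))
      = exp (c * \<mu> + c\<^sup>2 * \<sigma>\<^sup>2 / 2) * exp (- (x - (\<mu> + c * \<sigma>\<^sup>2))\<^sup>2 / (2 * \<sigma>\<^sup>2))"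
    by (simp only: exp_add[symmetric])
  then show ?thesis
    unfolding normal_density_def mult.left_commute[of "exp (c * x)"]
    by (simp only:) (rule mult.left_commute)
qed

lemma (in prob_space) normal_exp_indicator:
  assumes X: "distributed M lborel X (normal_density \<mu> \<sigma>)" and "\<sigma> > 0"
    and [measurable]: "A \<in> sets borel"
  shows normal_exp_indicator_integrable: "integrable M (\<lambda>\<omega>. indicator A (X \<omega>) * exp (c * X \<omega>))"
    and normal_exp_indicator_expectation: "expectation (\<lambda>\<omega>. indicator A (X \<omega>) * exp (c * X \<omega>))
      = exp (c * \<mu> + c\<^sup>2 * \<sigma>\<^sup>2 / 2) * measure (normal_law (\<mu> + c * \<sigma>\<^sup>2) \<sigma>) A"
proof -
  have tilt: "normal_density \<mu> \<sigma> x * (indicator A x * exp (c * x))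
      = exp (c * \<mu> + c\<^sup>2 * \<sigma>\<^sup>2 / 2) * (indicator A x * normal_density (\<mu> + c * \<sigma>\<^sup>2) \<sigma> x)" for x
    using normal_density_exp_tilt[OF \<open>\<sigma> > 0\<close>, of c x \<mu>] by (simp add: ac_simps)
  have "integrable lborel (\<lambda>x. indicator A x * normal_density (\<mu> + c * \<sigma>\<^sup>2) \<sigma> x)"
    using integrable_real_mult_indicator[of A lborel "normal_density (\<mu> + c * \<sigma>\<^sup>2) \<sigma>"] \<open>\<sigma> > 0\<close>
    by (simp add: mult.commute)
  then have "integrable lborel (\<lambda>x. normal_density \<mu> \<sigma> x * (indicator A x * exp (c * x)))"
    unfolding tilt by simp
  then show "integrable M (\<lambda>\<omega>. indicator A (X \<omega>) * exp (c * X \<omega>))"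
    using distributed_integrable[OF X] by simp
  show "expectation (\<lambda>\<omega>. indicator A (X \<omega>) * exp (c * X \<omega>))
      = exp (c * \<mu> + c\<^sup>2 * \<sigma>\<^sup>2 / 2) * measure (normal_law (\<mu> + c * \<sigma>\<^sup>2) \<sigma>) A"
    using distributed_integral[OF X, of "\<lambda>x. indicator A x * exp (c * x)", symmetric] \<open>\<sigma> > 0\<close>
    by (simp add: tilt measure_normal_law_integral)
qed

lemma (in prob_space) normal_mgf:
  assumes "distributed M lborel X (normal_density \<mu> \<sigma>)" and "\<sigma> > 0"
  shows normal_mgf_integrable: "integrable M (\<lambda>\<omega>. exp (c * X \<omega>))"
    and normal_mgf_expectation: "expectation (\<lambda>\<omega>. exp (c * X \<omega>)) = exp (c * \<mu> + c\<^sup>2 * \<sigma>\<^sup>2 / 2)"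
proof -
  interpret tilted: prob_space "normal_law (\<mu> + c * \<sigma>\<^sup>2) \<sigma>"
    using assms(2) by (rule prob_space_normal_density)
  show "integrable M (\<lambda>\<omega>. exp (c * X \<omega>))"
    using normal_exp_indicator_integrable[OF assms, of UNIV c] by simp
  show "expectation (\<lambda>\<omega>. exp (c * X \<omega>)) = exp (c * \<mu> + c\<^sup>2 * \<sigma>\<^sup>2 / 2)"
    using normal_exp_indicator_expectation[OF assms, of UNIV c] tilted.prob_space by simp
qed

lemma (in prob_space)
  assumes "distributed M lborel X (normal_density \<mu> \<sigma>)" and "\<sigma> > 0"
  shows lognormal_moment_integrable: "integrable M (\<lambda>\<omega>. exp (X \<omega>) ^ n)"
    and lognormal_moment_expectation:
      "expectation (\<lambda>\<omega>. exp (X \<omega>) ^ n) = exp (n * \<mu> + n\<^sup>2 * \<sigma>\<^sup>2 / 2)"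
  using normal_mgf[OF assms, of "real n"] by (simp_all flip: exp_of_nat_mult)

lemma signal_eq_indicator:
  "signal k \<sigma> x = indicator {..- (k * \<sigma>)} x - indicator {k * \<sigma>..} x"
  by (simp add: signal_def indicator_def)

lemma signal_squared_eq_indicator:
  assumes "k * \<sigma> > 0"
  shows "(signal k \<sigma> x)\<^sup>2 = indicator {..- (k * \<sigma>)} x + indicator {k * \<sigma>..} x"
  using assms by (simp add: signal_def indicator_def)

lemma borel_measurable_signal [measurable]: "signal k \<sigma> \<in> borel_measurable borel"
  unfolding signal_def[abs_def] by measurable

lemma (in prob_space) normal_exp_tails:
  assumes X: "distributed M lborel X (normal_density 0 \<sigma>)" and "\<sigma> > 0"
  shows "expectation (\<lambda>\<omega>. indicator {..- (k * \<sigma>)} (X \<omega>) * exp (c * X \<omega>))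
      = exp (c\<^sup>2 * \<sigma>\<^sup>2 / 2) * measure std_normal_law {..- k - c * \<sigma>}"
    and "expectation (\<lambda>\<omega>. indicator {k * \<sigma>..} (X \<omega>) * exp (c * X \<omega>))
      = exp (c\<^sup>2 * \<sigma>\<^sup>2 / 2) * measure std_normal_law {k - c * \<sigma>..}"
proof -
  have lower: "(- (k * \<sigma>) - (0 + c * \<sigma>\<^sup>2)) / \<sigma> = - k - c * \<sigma>"
    and upper: "(k * \<sigma> - (0 + c * \<sigma>\<^sup>2)) / \<sigma> = k - c * \<sigma>"
    using \<open>\<sigma> > 0\<close> by (simp_all add: field_simps power2_eq_square)
  have "expectation (\<lambda>\<omega>. indicator {..- (k * \<sigma>)} (X \<omega>) * exp (c * X \<omega>))
      = exp (c * 0 + c\<^sup>2 * \<sigma>\<^sup>2 / 2) * measure (normal_law (0 + c * \<sigma>\<^sup>2) \<sigma>) {..- (k * \<sigma>)}"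
    by (rule normal_exp_indicator_expectation[OF assms]) simp
  also have "measure (normal_law (0 + c * \<sigma>\<^sup>2) \<sigma>) {..- (k * \<sigma>)} = measure std_normal_law {..- k - c * \<sigma>}"
    by (simp only: measure_normal_law_atMost[OF \<open>\<sigma> > 0\<close>] lower)
  finally show "expectation (\<lambda>\<omega>. indicator {..- (k * \<sigma>)} (X \<omega>) * exp (c * X \<omega>))
      = exp (c\<^sup>2 * \<sigma>\<^sup>2 / 2) * measure std_normal_law {..- k - c * \<sigma>}"
    by simp
  have "expectation (\<lambda>\<omega>. indicator {k * \<sigma>..} (X \<omega>) * exp (c * X \<omega>))
      = exp (c * 0 + c\<^sup>2 * \<sigma>\<^sup>2 / 2) * measure (normal_law (0 + c * \<sigma>\<^sup>2) \<sigma>) {k * \<sigma>..}"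
    by (rule normal_exp_indicator_expectation[OF assms]) simp
  also have "measure (normal_law (0 + c * \<sigma>\<^sup>2) \<sigma>) {k * \<sigma>..} = measure std_normal_law {k - c * \<sigma>..}"
    by (simp only: measure_normal_law_atLeast[OF \<open>\<sigma> > 0\<close>] upper)
  finally show "expectation (\<lambda>\<omega>. indicator {k * \<sigma>..} (X \<omega>) * exp (c * X \<omega>))
      = exp (c\<^sup>2 * \<sigma>\<^sup>2 / 2) * measure std_normal_law {k - c * \<sigma>..}"
    by simp
qed

lemma (in prob_space) signal_exp:
  assumes X: "distributed M lborel X (normal_density 0 \<sigma>)" and "\<sigma> > 0"
  shows signal_exp_integrable: "integrable M (\<lambda>\<omega>. signal k \<sigma> (X \<omega>) * exp (c * X \<omega>))"
    and signal_exp_expectation: "expectation (\<lambda>\<omega>. signal k \<sigma> (X \<omega>) * exp (c * X \<omega>))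
      = exp (c\<^sup>2 * \<sigma>\<^sup>2 / 2)
        * (measure std_normal_law {..- k - c * \<sigma>} - measure std_normal_law {k - c * \<sigma>..})"
proof -
  have eq: "(\<lambda>\<omega>. signal k \<sigma> (X \<omega>) * exp (c * X \<omega>))
      = (\<lambda>\<omega>. indicator {..- (k * \<sigma>)} (X \<omega>) * exp (c * X \<omega>)
              - indicator {k * \<sigma>..} (X \<omega>) * exp (c * X \<omega>))"
    by (simp add: signal_eq_indicator left_diff_distrib)
  show "integrable M (\<lambda>\<omega>. signal k \<sigma> (X \<omega>) * exp (c * X \<omega>))"
    unfolding eq by (intro Bochner_Integration.integrable_diff normal_exp_indicator_integrable[OF assms]) auto
  show "expectation (\<lambda>\<omega>. signal k \<sigma> (X \<omega>) * exp (c * X \<omega>))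
      = exp (c\<^sup>2 * \<sigma>\<^sup>2 / 2)
        * (measure std_normal_law {..- k - c * \<sigma>} - measure std_normal_law {k - c * \<sigma>..})"
    unfolding eq
    by (subst Bochner_Integration.integral_diff)
       (auto intro!: normal_exp_indicator_integrable[OF assms]
             simp: normal_exp_tails[OF assms] right_diff_distrib)
qed

lemma (in prob_space) signal_squared_exp:
  assumes X: "distributed M lborel X (normal_density 0 \<sigma>)" and "\<sigma> > 0" and "k > 0"
  shows signal_squared_exp_integrable: "integrable M (\<lambda>\<omega>. (signal k \<sigma> (X \<omega>))\<^sup>2 * exp (c * X \<omega>))"
    and signal_squared_exp_expectation: "expectation (\<lambda>\<omega>. (signal k \<sigma> (X \<omega>))\<^sup>2 * exp (c * X \<omega>))
      = exp (c\<^sup>2 * \<sigma>\<^sup>2 / 2)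
        * (measure std_normal_law {..- k - c * \<sigma>} + measure std_normal_law {k - c * \<sigma>..})"
proof -
  have eq: "(\<lambda>\<omega>. (signal k \<sigma> (X \<omega>))\<^sup>2 * exp (c * X \<omega>))
      = (\<lambda>\<omega>. indicator {..- (k * \<sigma>)} (X \<omega>) * exp (c * X \<omega>)
              + indicator {k * \<sigma>..} (X \<omega>) * exp (c * X \<omega>))"
    using assms(2,3) by (simp add: signal_squared_eq_indicator distrib_right)
  show "integrable M (\<lambda>\<omega>. (signal k \<sigma> (X \<omega>))\<^sup>2 * exp (c * X \<omega>))"
    unfolding eq by (intro Bochner_Integration.integrable_add normal_exp_indicator_integrable[OF X assms(2)]) auto
  show "expectation (\<lambda>\<omega>. (signal k \<sigma> (X \<omega>))\<^sup>2 * exp (c * X \<omega>))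
      = exp (c\<^sup>2 * \<sigma>\<^sup>2 / 2)
        * (measure std_normal_law {..- k - c * \<sigma>} + measure std_normal_law {k - c * \<sigma>..})"
    unfolding eq
    by (subst Bochner_Integration.integral_add)
       (auto intro!: normal_exp_indicator_integrable[OF X assms(2)]
             simp: normal_exp_tails[OF X assms(2)] distrib_left)
qed

lemma (in prob_space) indep_vars_indep_var:
  assumes "indep_vars (\<lambda>_. N) X I" "i \<in> I" "j \<in> I" "i \<noteq> j"
  shows "indep_var N (X i) N (X j)"
proof -
  have "indep_var (PiM {i} (\<lambda>_. N)) (\<lambda>\<omega>. restrict (\<lambda>i. X i \<omega>) {i})
      (PiM {j} (\<lambda>_. N)) (\<lambda>\<omega>. restrict (\<lambda>i. X i \<omega>) {j})"
    using assms by (intro indep_var_restrict) auto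
  from indep_var_compose[OF this measurable_component_singleton measurable_component_singleton]
  show ?thesis by (simp add: comp_def)
qed

lemma (in prob_space)
  fixes f g :: "'b \<Rightarrow> real"
  assumes "indep_var N X N' Y" "f \<in> borel_measurable N" "g \<in> borel_measurable N'"
    and "integrable M (\<lambda>\<omega>. f (X \<omega>))" "integrable M (\<lambda>\<omega>. g (Y \<omega>))"
  shows indep_var_compose_integrable: "integrable M (\<lambda>\<omega>. f (X \<omega>) * g (Y \<omega>))"
    and indep_var_compose_expectation:
      "expectation (\<lambda>\<omega>. f (X \<omega>) * g (Y \<omega>)) = expectation (\<lambda>\<omega>. f (X \<omega>)) * expectation (\<lambda>\<omega>. g (Y \<omega>))"
  using indep_var_compose[OF assms(1-3)] assms(4,5)
  by (simp_all add: comp_def indep_var_integrable indep_var_lebesgue_integral)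

lemma (in prob_space) indep_var_compose_variance:
  fixes f g :: "'b \<Rightarrow> real"
  assumes "indep_var N X N Y" and [measurable]: "f \<in> borel_measurable N" "g \<in> borel_measurable N"
    and "integrable M (\<lambda>\<omega>. f (X \<omega>))" "integrable M (\<lambda>\<omega>. g (Y \<omega>))"
    and "integrable M (\<lambda>\<omega>. (f (X \<omega>))\<^sup>2)" "integrable M (\<lambda>\<omega>. (g (Y \<omega>))\<^sup>2)"
  shows "variance (\<lambda>\<omega>. f (X \<omega>) * g (Y \<omega>))
    = expectation (\<lambda>\<omega>. (f (X \<omega>))\<^sup>2) * expectation (\<lambda>\<omega>. (g (Y \<omega>))\<^sup>2)
      - (expectation (\<lambda>\<omega>. f (X \<omega>)) * expectation (\<lambda>\<omega>. g (Y \<omega>)))\<^sup>2"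
proof -
  have "integrable M (\<lambda>\<omega>. (f (X \<omega>))\<^sup>2 * (g (Y \<omega>))\<^sup>2)"
    and "expectation (\<lambda>\<omega>. (f (X \<omega>))\<^sup>2 * (g (Y \<omega>))\<^sup>2)
      = expectation (\<lambda>\<omega>. (f (X \<omega>))\<^sup>2) * expectation (\<lambda>\<omega>. (g (Y \<omega>))\<^sup>2)"
    using indep_var_compose_integrable[OF assms(1), of "\<lambda>x. (f x)\<^sup>2" "\<lambda>y. (g y)\<^sup>2"]
      indep_var_compose_expectation[OF assms(1), of "\<lambda>x. (f x)\<^sup>2" "\<lambda>y. (g y)\<^sup>2"] assms(6,7)
    by simp_all
  then show ?thesis
    using variance_eq[of "\<lambda>\<omega>. f (X \<omega>) * g (Y \<omega>)"]
      indep_var_compose_integrable[OF assms(1-5)] indep_var_compose_expectation[OF assms(1-5)]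
    by (simp add: power_mult_distrib)
qed

lemma (in prob_space)
  assumes "indep_var borel X borel Y" and Y: "distributed M lborel Y (normal_density 0 \<sigma>)" and "\<sigma> > 0"
    and [measurable]: "f \<in> borel_measurable borel" and "integrable M (\<lambda>\<omega>. f (X \<omega>))"
  shows indep_var_normal_exp_integrable: "integrable M (\<lambda>\<omega>. f (X \<omega>) * exp (c * Y \<omega>))"
    and indep_var_normal_exp_expectation:
      "expectation (\<lambda>\<omega>. f (X \<omega>) * exp (c * Y \<omega>)) = expectation (\<lambda>\<omega>. f (X \<omega>)) * exp (c\<^sup>2 * \<sigma>\<^sup>2 / 2)"
  using indep_var_compose_integrable[OF assms(1,4), of "\<lambda>y. exp (c * y)"]
    indep_var_compose_expectation[OF assms(1,4), of "\<lambda>y. exp (c * y)"]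
    normal_mgf[OF Y \<open>\<sigma> > 0\<close>, of c] assms(5)
  by simp_all

lemma (in prob_space)
  assumes e0: "distributed M lborel e0 (normal_density 0 \<sigma>)"
    and e1: "distributed M lborel e1 (normal_density 0 \<sigma>)"
    and indep: "indep_var borel e0 borel e1" and "\<sigma> > 0"
  shows signal_spread_integrable: "integrable M (\<lambda>\<omega>. signal k \<sigma> (e0 \<omega>) * (exp (e1 \<omega> - e0 \<omega>) - 1))"
    and signal_spread_expectation: "expectation (\<lambda>\<omega>. signal k \<sigma> (e0 \<omega>) * (exp (e1 \<omega> - e0 \<omega>) - 1))
      = exp (\<sigma>\<^sup>2) * measure std_normal_law {k - \<sigma> .. k + \<sigma>}"
proof -
  let ?S = "\<lambda>c \<omega>. signal k \<sigma> (e0 \<omega>) * exp (c * e0 \<omega>)"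
  have [measurable]: "e0 \<in> borel_measurable M" "e1 \<in> borel_measurable M"
    using e0 e1 by (auto dest: distributed_measurable)
  have eq: "(\<lambda>\<omega>. signal k \<sigma> (e0 \<omega>) * (exp (e1 \<omega> - e0 \<omega>) - 1))
      = (\<lambda>\<omega>. ?S (- 1) \<omega> * exp (1 * e1 \<omega>) - ?S 0 \<omega>)"
    by (simp add: fun_eq_iff exp_diff exp_minus field_simps)
  have S_int: "integrable M (?S c)" for c
    by (rule signal_exp_integrable[OF e0 \<open>\<sigma> > 0\<close>])
  have prod_int: "integrable M (\<lambda>\<omega>. ?S (- 1) \<omega> * exp (1 * e1 \<omega>))"
    by (rule indep_var_normal_exp_integrable[OF indep e1 \<open>\<sigma> > 0\<close>, where f = "\<lambda>x. signal k \<sigma> x * exp (- 1 * x)"])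
       (measurable, rule S_int)
  show "integrable M (\<lambda>\<omega>. signal k \<sigma> (e0 \<omega>) * (exp (e1 \<omega> - e0 \<omega>) - 1))"
    unfolding eq using prod_int S_int by (rule Bochner_Integration.integrable_diff)
  have "measure std_normal_law {..- k - - 1 * \<sigma>} = measure std_normal_law {k - \<sigma>..}"
    using measure_std_normal_law_atMost_uminus[of "k - \<sigma>"] by simp
  moreover have "measure std_normal_law {..- k - 0 * \<sigma>} = measure std_normal_law {k - 0 * \<sigma>..}"
    using measure_std_normal_law_atMost_uminus[of k] by simp
  moreover have "measure std_normal_law {k - \<sigma> .. k + \<sigma>}
      = measure std_normal_law {k - \<sigma>..} - measure std_normal_law {k + \<sigma>..}"
    using \<open>\<sigma> > 0\<close> by (intro measure_normal_law_atLeastAtMost) auto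
  ultimately show "expectation (\<lambda>\<omega>. signal k \<sigma> (e0 \<omega>) * (exp (e1 \<omega> - e0 \<omega>) - 1))
      = exp (\<sigma>\<^sup>2) * measure std_normal_law {k - \<sigma> .. k + \<sigma>}"
    unfolding eq
    using indep_var_normal_exp_expectation[OF indep e1 \<open>\<sigma> > 0\<close>, where f = "\<lambda>x. signal k \<sigma> x * exp (- 1 * x)" and c = 1]
      signal_exp_expectation[OF e0 \<open>\<sigma> > 0\<close>, of k "- 1"] signal_exp_expectation[OF e0 \<open>\<sigma> > 0\<close>, of k 0]
      prod_int S_int[of "- 1"] S_int[of 0] mult_exp_exp[of "\<sigma>\<^sup>2 / 2" "\<sigma>\<^sup>2 / 2"]
    by (simp add: mult_ac)
qed

(* The unit coefficients are kept so that every summand has the shape s\<^sup>2 * exp (c * a) * exp (c' * b). *)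
lemma power2_mult_exp_diff_minus_one:
  fixes s a b :: real
  shows "(s * (exp (b - a) - 1))\<^sup>2
    = s\<^sup>2 * exp (- 2 * a) * exp (2 * b) - 2 * (s\<^sup>2 * exp (- 1 * a) * exp (1 * b)) + s\<^sup>2 * exp (0 * a)"
proof -
  have "exp (- 2 * a) * exp (2 * b) = (exp (b - a))\<^sup>2" "exp (- 1 * a) * exp (1 * b) = exp (b - a)"
    by (simp_all add: mult_exp_exp power2_eq_square)
  then show ?thesis by (simp add: power2_eq_square algebra_simps)
qed

lemma (in prob_space)
  assumes e0: "distributed M lborel e0 (normal_density 0 \<sigma>)"
    and e1: "distributed M lborel e1 (normal_density 0 \<sigma>)"
    and indep: "indep_var borel e0 borel e1" and "\<sigma> > 0" and "k > 0"
  shows signal_spread_squared_integrable: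
      "integrable M (\<lambda>\<omega>. (signal k \<sigma> (e0 \<omega>) * (exp (e1 \<omega> - e0 \<omega>) - 1))\<^sup>2)"
    and signal_spread_squared_expectation:
      "expectation (\<lambda>\<omega>. (signal k \<sigma> (e0 \<omega>) * (exp (e1 \<omega> - e0 \<omega>) - 1))\<^sup>2)
      = exp (4 * \<sigma>\<^sup>2) * (measure std_normal_law {.. - k + 2 * \<sigma>} + measure std_normal_law {k + 2 * \<sigma> ..})
        - 2 * exp (\<sigma>\<^sup>2) * (measure std_normal_law {.. - k + \<sigma>} + measure std_normal_law {k + \<sigma> ..})
        + 2 * measure std_normal_law {k ..}"
proof -
  let ?T = "\<lambda>c \<omega>. (signal k \<sigma> (e0 \<omega>))\<^sup>2 * exp (c * e0 \<omega>)"
  have [measurable]: "e0 \<in> borel_measurable M" "e1 \<in> borel_measurable M"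
    using e0 e1 by (auto dest: distributed_measurable)
  have eq: "(\<lambda>\<omega>. (signal k \<sigma> (e0 \<omega>) * (exp (e1 \<omega> - e0 \<omega>) - 1))\<^sup>2)
      = (\<lambda>\<omega>. ?T (- 2) \<omega> * exp (2 * e1 \<omega>) - 2 * (?T (- 1) \<omega> * exp (1 * e1 \<omega>)) + ?T 0 \<omega>)"
    by (simp only: power2_mult_exp_diff_minus_one)
  have T_int: "integrable M (?T c)" for c
    by (rule signal_squared_exp_integrable[OF e0 \<open>\<sigma> > 0\<close> \<open>k > 0\<close>])
  have prod_int: "integrable M (\<lambda>\<omega>. ?T c \<omega> * exp (c' * e1 \<omega>))" for c c'
    by (rule indep_var_normal_exp_integrable[OF indep e1 \<open>\<sigma> > 0\<close>, where f = "\<lambda>x. (signal k \<sigma> x)\<^sup>2 * exp (c * x)"])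
       (measurable, rule T_int)
  have prod_exp: "expectation (\<lambda>\<omega>. ?T c \<omega> * exp (c' * e1 \<omega>)) = expectation (?T c) * exp (c'\<^sup>2 * \<sigma>\<^sup>2 / 2)"
    for c c'
    by (rule indep_var_normal_exp_expectation[OF indep e1 \<open>\<sigma> > 0\<close>, where f = "\<lambda>x. (signal k \<sigma> x)\<^sup>2 * exp (c * x)"])
       (measurable, rule T_int)
  show "integrable M (\<lambda>\<omega>. (signal k \<sigma> (e0 \<omega>) * (exp (e1 \<omega> - e0 \<omega>) - 1))\<^sup>2)"
    unfolding eq by (intro Bochner_Integration.integrable_add Bochner_Integration.integrable_diff
        integrable_mult_right prod_int T_int)
  have exp_split: "exp (4 * \<sigma>\<^sup>2) = exp (2 * \<sigma>\<^sup>2) * exp (2 * \<sigma>\<^sup>2)"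
      "exp (\<sigma>\<^sup>2) = exp (\<sigma>\<^sup>2 / 2) * exp (\<sigma>\<^sup>2 / 2)"
    by (simp_all add: mult_exp_exp)
  show "expectation (\<lambda>\<omega>. (signal k \<sigma> (e0 \<omega>) * (exp (e1 \<omega> - e0 \<omega>) - 1))\<^sup>2)
      = exp (4 * \<sigma>\<^sup>2) * (measure std_normal_law {.. - k + 2 * \<sigma>} + measure std_normal_law {k + 2 * \<sigma> ..})
        - 2 * exp (\<sigma>\<^sup>2) * (measure std_normal_law {.. - k + \<sigma>} + measure std_normal_law {k + \<sigma> ..})
        + 2 * measure std_normal_law {k ..}"
    unfolding eq
    using prod_int[of "- 2" 2] prod_int[of "- 1" 1] T_int[of 0] prod_exp[of "- 2" 2] prod_exp[of "- 1" 1]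
      signal_squared_exp_expectation[OF e0 \<open>\<sigma> > 0\<close> \<open>k > 0\<close>, of "- 2"]
      signal_squared_exp_expectation[OF e0 \<open>\<sigma> > 0\<close> \<open>k > 0\<close>, of "- 1"]
      signal_squared_exp_expectation[OF e0 \<open>\<sigma> > 0\<close> \<open>k > 0\<close>, of 0]
      measure_std_normal_law_atMost_uminus[of k]
    by (simp add: exp_split mult_ac)
qed

lemma ret_diff_eq:
  fixes p1 p2 :: "nat \<Rightarrow> 'a \<Rightarrow> real"
  assumes "p1 t \<omega> > 0" "p1 (Suc t) \<omega> > 0" "p2 t \<omega> > 0" "p2 (Suc t) \<omega> > 0"
    and "ln (p1 (Suc t) \<omega>) = ln (p1 t \<omega>) + g"
    and "e0 = ln (p2 t \<omega>) - ln (p1 t \<omega>)" "e1 = ln (p2 (Suc t) \<omega>) - ln (p1 (Suc t) \<omega>)"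
  shows "ret p2 t \<omega> - ret p1 t \<omega> = exp g * (exp (e1 - e0) - 1)"
proof -
  have "exp (ln (p1 (Suc t) \<omega>)) = exp (ln (p1 t \<omega>) + g)"
    using assms(5) by simp
  then have p1: "p1 (Suc t) \<omega> = p1 t \<omega> * exp g"
    using assms(1,2) by (simp add: exp_add)
  have "exp e0 = p2 t \<omega> / p1 t \<omega>" "exp e1 = p2 (Suc t) \<omega> / p1 (Suc t) \<omega>"
    using assms(1-4,6,7) by (simp_all add: exp_diff)
  then have p2: "p2 t \<omega> = p1 t \<omega> * exp e0" "p2 (Suc t) \<omega> = p1 t \<omega> * exp g * exp e1"
    using assms(1,2) p1 by (simp_all add: field_simps)
  show ?thesis
    using assms(1) by (simp add: ret_def p1 p2 exp_diff field_simps)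
qed

theorem theorem1:
  fixes M :: "'a measure"
    and \<mu>1 \<sigma>1 \<sigma> k :: real
    and p1 p2 \<delta> \<epsilon> :: "nat \<Rightarrow> 'a \<Rightarrow> real"
    and t :: nat
  assumes "prob_space M"
    and "\<sigma>1 > 0" and "\<sigma> > 0" and "k > 0"
    and pos1: "\<And>s \<omega>. \<omega> \<in> space M \<Longrightarrow> p1 s \<omega> > 0"
    and pos2: "\<And>s \<omega>. \<omega> \<in> space M \<Longrightarrow> p2 s \<omega> > 0"
    and walk: "\<And>s \<omega>. \<omega> \<in> space M \<Longrightarrow>
                 ln (p1 (Suc s) \<omega>) = ln (p1 s \<omega>) + \<mu>1 + \<delta> (Suc s) \<omega>"
    and spread: "\<And>s \<omega>. \<omega> \<in> space M \<Longrightarrow> \<epsilon> s \<omega> = ln (p2 s \<omega>) - ln (p1 s \<omega>)"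
    and \<delta>_dist: "\<And>s. distributed M lborel (\<delta> s) (normal_density 0 \<sigma>1)"
    and \<delta>_indep: "prob_space.indep_vars M (\<lambda>_. borel) \<delta> UNIV"
    and \<epsilon>_dist: "\<And>s. distributed M lborel (\<epsilon> s) (normal_density 0 \<sigma>)"
    and \<epsilon>_indep: "prob_space.indep_vars M (\<lambda>_. borel) \<epsilon> UNIV"
    and fam_indep: "prob_space.indep_var M
                      (PiM UNIV (\<lambda>_. borel)) (\<lambda>\<omega> s. \<delta> s \<omega>)
                      (PiM UNIV (\<lambda>_. borel)) (\<lambda>\<omega> s. \<epsilon> s \<omega>)"
  defines "r \<equiv> \<lambda>\<omega>. signal k \<sigma> (\<epsilon> t \<omega>) * (ret p2 t \<omega> - ret p1 t \<omega>)"
    and "m \<equiv> exp (\<mu>1 + \<sigma>1\<^sup>2 / 2 + \<sigma>\<^sup>2) * measure std_normal_law {k - \<sigma> .. k + \<sigma>}"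
  shows "integrable M r \<and> prob_space.expectation M r = m \<and>
         prob_space.variance M r =
           exp (2 * \<mu>1 + 2 * \<sigma>1\<^sup>2 + 4 * \<sigma>\<^sup>2)
             * (measure std_normal_law {.. - k + 2 * \<sigma>} + measure std_normal_law {k + 2 * \<sigma> ..})
         - 2 * exp (2 * \<mu>1 + 2 * \<sigma>1\<^sup>2 + \<sigma>\<^sup>2)
             * (measure std_normal_law {.. - k + \<sigma>} + measure std_normal_law {k + \<sigma> ..})
         + 2 * exp (2 * \<mu>1 + 2 * \<sigma>1\<^sup>2) * measure std_normal_law {k ..}
         - m\<^sup>2"
proof -
  \<comment> \<open>Only \<delta> (Suc t) enters r.\<close>
  interpret prob_space M by fact
  have [measurable]: "\<delta> s \<in> borel_measurable M" "\<epsilon> s \<in> borel_measurable M" for s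
    using \<delta>_dist[of s] \<epsilon>_dist[of s] by (auto dest: distributed_measurable)
  let ?f = "\<lambda>x. exp (\<mu>1 + x (Suc t))"
  let ?g = "\<lambda>x. signal k \<sigma> (x t) * (exp (x (Suc t) - x t) - 1)"
  let ?r = "\<lambda>\<omega>. ?f (\<lambda>s. \<delta> s \<omega>) * ?g (\<lambda>s. \<epsilon> s \<omega>)"
  have r_eq: "r \<omega> = ?r \<omega>" if "\<omega> \<in> space M" for \<omega>
    using ret_diff_eq[of p1 t \<omega> p2 "\<mu>1 + \<delta> (Suc t) \<omega>" "\<epsilon> t \<omega>" "\<epsilon> (Suc t) \<omega>"]
      pos1 pos2 walk spread that
    unfolding r_def by (simp add: add.assoc)
  have "distributed M lborel (\<lambda>\<omega>. \<mu>1 + \<delta> (Suc t) \<omega>) (normal_density \<mu>1 \<sigma>1)"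
    using normal_density_affine[OF \<delta>_dist \<open>\<sigma>1 > 0\<close>, of 1 \<mu>1] by simp
  note X_moments = lognormal_moment_integrable[OF this \<open>\<sigma>1 > 0\<close>, of 1]
    lognormal_moment_integrable[OF this \<open>\<sigma>1 > 0\<close>, of 2]
    lognormal_moment_expectation[OF this \<open>\<sigma>1 > 0\<close>, of 1]
    lognormal_moment_expectation[OF this \<open>\<sigma>1 > 0\<close>, of 2]
  have "indep_var borel (\<epsilon> t) borel (\<epsilon> (Suc t))"
    by (rule indep_vars_indep_var[OF \<epsilon>_indep]) auto
  note Y_moments = signal_spread_integrable[OF \<epsilon>_dist \<epsilon>_dist this \<open>\<sigma> > 0\<close>]
    signal_spread_expectation[OF \<epsilon>_dist \<epsilon>_dist this \<open>\<sigma> > 0\<close>]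
    signal_spread_squared_integrable[OF \<epsilon>_dist \<epsilon>_dist this \<open>\<sigma> > 0\<close> \<open>k > 0\<close>]
    signal_spread_squared_expectation[OF \<epsilon>_dist \<epsilon>_dist this \<open>\<sigma> > 0\<close> \<open>k > 0\<close>]
  have "integrable M ?r" "expectation ?r = m"
    "variance ?r = exp (2 * \<mu>1 + 2 * \<sigma>1\<^sup>2) * expectation (\<lambda>\<omega>. (?g (\<lambda>s. \<epsilon> s \<omega>))\<^sup>2) - m\<^sup>2"
    using indep_var_compose_integrable[OF fam_indep, of ?f ?g]
      indep_var_compose_expectation[OF fam_indep, of ?f ?g]
      indep_var_compose_variance[OF fam_indep, of ?f ?g] X_moments Y_moments(1-3)
    unfolding m_def by (simp_all add: mult_exp_exp)
  then have "integrable M r" "expectation r = m"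
    "variance r = exp (2 * \<mu>1 + 2 * \<sigma>1\<^sup>2) * expectation (\<lambda>\<omega>. (?g (\<lambda>s. \<epsilon> s \<omega>))\<^sup>2) - m\<^sup>2"
    using r_eq by (simp_all cong: Bochner_Integration.integrable_cong Bochner_Integration.integral_cong)
  moreover have "exp (2 * \<mu>1 + 2 * \<sigma>1\<^sup>2 + 4 * \<sigma>\<^sup>2) = exp (2 * \<mu>1 + 2 * \<sigma>1\<^sup>2) * exp (4 * \<sigma>\<^sup>2)"
    "exp (2 * \<mu>1 + 2 * \<sigma>1\<^sup>2 + \<sigma>\<^sup>2) = exp (2 * \<mu>1 + 2 * \<sigma>1\<^sup>2) * exp (\<sigma>\<^sup>2)"
    by (simp_all add: exp_add)
  ultimately show ?thesis
    unfolding Y_moments(4) by (simp add: algebra_simps)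
qed

end
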